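(* Fix any number of agents and items and any reported strict linear orders of all agents over all items, and consider the simultaneous eating algorithm in two scenarios. In the normal scenario, all agents eat according to the algorithm throughout. In the pause scenario, the process is identical to the normal scenario up to a time $t$; from time $t$ on, some set $S$ of agents is paused (eats nothing) for some period of time (of arbitrary length, possibly forever), after which these agents resume eating according to the algorithm, while all agents outside $S$ continue eating according to the algorithm throughout. Then for every item and every moment $s \ge t$ (up to the moment the item is exhausted in the normal scenario), the remaining amount of that item at time $s$ in the pause scenario is at least its remaining amount at time $s$ in the normal scenario.
   Context: Simultaneous eating algorithm: there are agents and divisible items of unit supply; each agent has a reported strict linear order over all items. Every non-paused agent consumes, at rate $1$ per unit time, its most preferred item (according to its report) among the items with positive remaining supply; when an item is exhausted, the agents consuming it move on to their most preferred item still having positive remaining supply. A paused agent consumes nothing while paused. *)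

theory Defs
  imports "HOL-Analysis.Analysis"
begin

text \<open>Preferences: for each agent i, P i is a strict linear order on the items;
  (x, y) \<in> P i means agent i strictly prefers item x to item y.
  A :: real \<Rightarrow> 'a set gives the set of non-paused (active) agents at each time.
  r :: real \<Rightarrow> 'o \<Rightarrow> real gives the remaining supply of each item at each time.\<close>

definition eats :: "('a \<Rightarrow> ('o \<times> 'o) set) \<Rightarrow> (real \<Rightarrow> 'a set) \<Rightarrow> (real \<Rightarrow> 'o \<Rightarrow> real)
    \<Rightarrow> 'a \<Rightarrow> 'o \<Rightarrow> real \<Rightarrow> bool" where
  "eats P A r i x \<tau> \<longleftrightarrow> i \<in> A \<tau> \<and> r \<tau> x > 0 \<and>
     (\<forall>y. r \<tau> y > 0 \<longrightarrow> y = x \<or> (x, y) \<in> P i)"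

definition eat_rate :: "('a::finite \<Rightarrow> ('o \<times> 'o) set) \<Rightarrow> (real \<Rightarrow> 'a set) \<Rightarrow> (real \<Rightarrow> 'o \<Rightarrow> real)
    \<Rightarrow> 'o \<Rightarrow> real \<Rightarrow> real" where
  "eat_rate P A r x \<tau> = real (card {i. eats P A r i x \<tau>})"

definition eating_run :: "('a::finite \<Rightarrow> ('o \<times> 'o) set) \<Rightarrow> (real \<Rightarrow> 'a set) \<Rightarrow> (real \<Rightarrow> 'o \<Rightarrow> real) \<Rightarrow> bool" where
  "eating_run P A r \<longleftrightarrow>
     (\<forall>x s. s \<ge> 0 \<longrightarrow> ((\<lambda>\<tau>. eat_rate P A r x \<tau>) has_integral (1 - r s x)) {0..s})"

text \<open>Activity pattern of the pause scenario: agents in S are paused during [t, u)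
  (u = \<infinity> means paused forever), everybody is active otherwise.\<close>
definition pause_pattern :: "'a set \<Rightarrow> real \<Rightarrow> ereal \<Rightarrow> real \<Rightarrow> 'a set" where
  "pause_pattern S t u \<tau> = (if t \<le> \<tau> \<and> ereal \<tau> < u then - S else UNIV)"

end

theory Submission
  imports Defs
begin

text \<open>Eating less can only delay exhaustion. Let r be the run in which every agent
  eats and r' any run of the algorithm. At a time where r \<le> r' item by item, every
  item still available in r is available in r'; so an agent eating an item y in r'
  that is still available in r has y as its favourite among the items available in r
  and eats y in r as well. Hence r' consumes no item faster than r as long as that
  item lasts in r, and the domination persists for a while. The set of dominated
  times is closed, so a real-induction argument extends the domination to all times.\<close>

lemma eat_rate_nonneg: "0 \<le> eat_rate P A r y \<tau>"
  unfolding eat_rate_def by simp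

lemma eat_rate_le_card: "eat_rate P A r y \<tau> \<le> real CARD('a)"
  for P :: "'a::finite \<Rightarrow> ('o \<times> 'o) set"
  unfolding eat_rate_def by (simp add: card_mono)

lemma eating_run_has_integral:
  fixes P :: "'a::finite \<Rightarrow> ('o \<times> 'o) set"
  assumes run: "eating_run P A r" and "0 \<le> a" "a \<le> b"
  shows "((\<lambda>\<tau>. eat_rate P A r y \<tau>) has_integral (r a y - r b y)) {a..b}"
proof -
  let ?f = "\<lambda>\<tau>. eat_rate P A r y \<tau>"
  have a: "(?f has_integral (1 - r a y)) {0..a}" and b: "(?f has_integral (1 - r b y)) {0..b}"
    using run assms unfolding eating_run_def by auto
  have "?f integrable_on {a..b}"
    using integrable_subinterval_real[OF has_integral_integrable[OF b]] assms by simp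
  moreover have "integral {0..a} ?f + integral {a..b} ?f = integral {0..b} ?f"
    using has_integral_integrable[OF b] assms by (intro Henstock_Kurzweil_Integration.integral_combine) auto
  ultimately show ?thesis
    using integral_unique[OF a] integral_unique[OF b] by (simp add: has_integral_iff)
qed

lemma eating_run_start:
  assumes "eating_run P A r"
  shows "r 0 y = 1"
proof -
  have "((\<lambda>\<tau>. eat_rate P A r y \<tau>) has_integral (1 - r 0 y)) {0..0}"
    using assms unfolding eating_run_def by (metis order_refl)
  then show ?thesis
    using has_integral_unique[OF _ has_integral_refl(2)] by fastforce
qed

lemma eating_run_antimono:
  fixes P :: "'a::finite \<Rightarrow> ('o \<times> 'o) set"
  assumes "eating_run P A r" and "0 \<le> a" "a \<le> b"
  shows "r b y \<le> r a y"
  using has_integral_nonneg[OF eating_run_has_integral[OF assms]] eat_rate_nonneg by fastforce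

lemma eating_run_decrease_le:
  fixes P :: "'a::finite \<Rightarrow> ('o \<times> 'o) set"
  assumes "eating_run P A r" and "0 \<le> a" "a \<le> b"
  shows "r a y - r b y \<le> real CARD('a) * (b - a)"
  using has_integral_le[OF eating_run_has_integral[OF assms] has_integral_const_real]
    eat_rate_le_card assms(3) by (fastforce simp: mult.commute)

lemma eating_run_continuous_on:
  fixes P :: "'a::finite \<Rightarrow> ('o \<times> 'o) set"
  assumes run: "eating_run P A r"
  shows "continuous_on {0..} (\<lambda>\<tau>. r \<tau> y)"
proof (rule lipschitz_on_continuous_on)
  show "(real CARD('a))-lipschitz_on {0..} (\<lambda>\<tau>. r \<tau> y)"
  proof (rule lipschitz_onI)
    fix a b :: real
    assume "a \<in> {0..}" "b \<in> {0..}"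
    then show "dist (r a y) (r b y) \<le> real CARD('a) * dist a b"
      using eating_run_decrease_le[OF run, of a b y] eating_run_decrease_le[OF run, of b a y]
        eating_run_antimono[OF run, of a b y] eating_run_antimono[OF run, of b a y]
      by (cases "a \<le> b") (auto simp: dist_real_def)
  qed simp
qed

lemma eating_run_nonneg:
  fixes P :: "'a::finite \<Rightarrow> ('o \<times> 'o) set"
  assumes run: "eating_run P A r" and "0 \<le> b"
  shows "0 \<le> r b y"
proof (rule ccontr)
  assume neg: "\<not> 0 \<le> r b y"
  have "continuous_on {0..b} (\<lambda>\<tau>. r \<tau> y)"
    using eating_run_continuous_on[OF run] by (rule continuous_on_subset) auto
  then obtain c where c: "0 \<le> c" "c \<le> b" "r c y = 0"
    using IVT2'[of "\<lambda>\<tau>. r \<tau> y" b 0 0] eating_run_start[OF run] neg \<open>0 \<le> b\<close> by auto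
  text \<open>Nobody eats an exhausted item, so the supply cannot drop below zero.\<close>
  have "((\<lambda>\<tau>. eat_rate P A r y \<tau>) has_integral 0) {c..b}"
  proof (rule has_integral_eq[OF _ has_integral_0])
    fix \<tau>
    assume "\<tau> \<in> {c..b}"
    then have "r \<tau> y \<le> 0"
      using eating_run_antimono[OF run c(1), of \<tau> y] c by auto
    then show "0 = eat_rate P A r y \<tau>"
      unfolding eat_rate_def eats_def by auto
  qed
  then have "r b y = r c y"
    using has_integral_unique[OF eating_run_has_integral[OF run c(1,2)]] by fastforce
  with c neg show False by simp
qed

lemma eat_rate_le_eat_rate_UNIV:
  assumes "0 < r \<sigma> y" and "\<And>z. 0 < r \<sigma> z \<Longrightarrow> 0 < r' \<sigma> z"
  shows "eat_rate P A r' y \<sigma> \<le> eat_rate P (\<lambda>_. UNIV) r y \<sigma>"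
proof -
  have "{i. eats P A r' i y \<sigma>} \<subseteq> {i. eats P (\<lambda>_. UNIV) r i y \<sigma>}"
    using assms unfolding eats_def by auto
  then show ?thesis
    unfolding eat_rate_def by (simp add: card_mono)
qed

lemma eating_run_UNIV_le_interval:
  fixes P :: "'a::finite \<Rightarrow> ('o \<times> 'o) set"
  assumes run: "eating_run P (\<lambda>_. UNIV) r" and run': "eating_run P A r'"
    and ab: "0 \<le> a" "a \<le> b" and "r a y \<le> r' a y" and pos: "0 < r b y"
    and avail: "\<And>\<sigma> z. a \<le> \<sigma> \<Longrightarrow> \<sigma> \<le> b \<Longrightarrow> 0 < r \<sigma> z \<Longrightarrow> 0 < r' \<sigma> z"
  shows "r b y \<le> r' b y"
proof -
  have "eat_rate P A r' y \<sigma> \<le> eat_rate P (\<lambda>_. UNIV) r y \<sigma>" if "\<sigma> \<in> {a..b}" for \<sigma>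
  proof (rule eat_rate_le_eat_rate_UNIV)
    show "0 < r \<sigma> y"
      using eating_run_antimono[OF run, of \<sigma> b y] pos that ab by auto
  qed (use avail that in auto)
  then have "r' a y - r' b y \<le> r a y - r b y"
    using has_integral_le[OF eating_run_has_integral[OF run' ab] eating_run_has_integral[OF run ab]]
    by blast
  with \<open>r a y \<le> r' a y\<close> show ?thesis by simp
qed

lemma eating_run_UNIV_le_at_right:
  fixes P :: "'a::finite \<Rightarrow> ('o::finite \<times> 'o) set"
  assumes run: "eating_run P (\<lambda>_. UNIV) r" and run': "eating_run P A r'"
    and "0 \<le> a" and dom: "\<forall>y. r a y \<le> r' a y"
  shows "\<exists>b>a. {a..<b} \<subseteq> {\<tau>. \<forall>y. r \<tau> y \<le> r' \<tau> y}"
proof -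
  have right_cont: "((\<lambda>\<tau>. q \<tau> z) \<longlongrightarrow> q a z) (at_right a)"
    if "eating_run P B q" for B q z
    by (intro continuous_on_Icc_at_rightD[of a "a + 1"]
        continuous_on_subset[OF eating_run_continuous_on[OF that]]) (use \<open>0 \<le> a\<close> in auto)
  have "\<forall>\<^sub>F \<sigma> in at_right a. 0 < r a z \<longrightarrow> 0 < r \<sigma> z \<and> 0 < r' \<sigma> z" for z
  proof (cases "0 < r a z")
    case True
    then have "\<forall>\<^sub>F \<sigma> in at_right a. 0 < r \<sigma> z" "\<forall>\<^sub>F \<sigma> in at_right a. 0 < r' \<sigma> z"
      using dom order_tendstoD(1)[OF right_cont[OF run]] order_tendstoD(1)[OF right_cont[OF run']]
      by (meson less_le_trans)+
    then show ?thesis by eventually_elim simp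
  qed simp
  then have "\<forall>\<^sub>F \<sigma> in at_right a. \<forall>z. 0 < r a z \<longrightarrow> 0 < r \<sigma> z \<and> 0 < r' \<sigma> z"
    by (rule eventually_all_finite)
  then obtain b where "b > a"
    and b: "\<And>\<sigma> z. a < \<sigma> \<Longrightarrow> \<sigma> < b \<Longrightarrow> 0 < r a z \<Longrightarrow> 0 < r' \<sigma> z"
    unfolding eventually_at_right_field by blast
  have avail: "0 < r' \<sigma> z" if "a \<le> \<sigma>" "\<sigma> < b" "0 < r \<sigma> z" for \<sigma> z
  proof -
    have "0 < r a z"
      using eating_run_antimono[OF run \<open>0 \<le> a\<close> \<open>a \<le> \<sigma>\<close>, of z] that by simp
    then show ?thesis
      by (cases "\<sigma> = a") (use b dom[rule_format, of z] that in auto)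
  qed
  have "r \<tau> y \<le> r' \<tau> y" if "a \<le> \<tau>" "\<tau> < b" for \<tau> y
  proof (cases "0 < r \<tau> y")
    case True
    show ?thesis
      by (rule eating_run_UNIV_le_interval[OF run run' \<open>0 \<le> a\<close> \<open>a \<le> \<tau>\<close> _ True])
        (use dom avail that in auto)
  next
    case False
    then show ?thesis
      using eating_run_nonneg[OF run', of \<tau> y] \<open>0 \<le> a\<close> that by simp
  qed
  with \<open>b > a\<close> show ?thesis by auto
qed

lemma closed_contains_atLeast:
  fixes G :: "real set"
  assumes "closed G" and "a \<in> G"
    and step: "\<And>m. m \<in> G \<Longrightarrow> a \<le> m \<Longrightarrow> \<exists>b>m. {m..<b} \<subseteq> G"
  shows "{a..} \<subseteq> G"
proof (rule ccontr)
  define B where "B = {a..} - G"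
  assume "\<not> {a..} \<subseteq> G"
  then have "B \<noteq> {}" unfolding B_def by auto
  have bdd: "bdd_below B" unfolding B_def by (auto intro: bdd_belowI[of _ a])
  define m where "m = Inf B"
  have "a \<le> m"
    unfolding m_def using \<open>B \<noteq> {}\<close> by (rule cInf_greatest) (auto simp: B_def)
  have below: "{a..<m} \<subseteq> G"
    using cInf_lower[OF _ bdd] unfolding m_def B_def by force
  have "m \<in> G"
  proof (cases "a = m")
    case False
    then have "{a..m} \<subseteq> G"
      using closure_mono[OF below] \<open>a \<le> m\<close> \<open>closed G\<close> by (simp add: closure_closed)
    then show ?thesis using \<open>a \<le> m\<close> by auto
  qed (use \<open>a \<in> G\<close> in simp)
  then obtain b where "b > m" and "{m..<b} \<subseteq> G"
    using step \<open>a \<le> m\<close> by blast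
  moreover obtain \<tau> where "\<tau> \<in> B" "\<tau> < b"
    using cInf_less_iff[OF \<open>B \<noteq> {}\<close> bdd] \<open>b > m\<close> unfolding m_def by blast
  ultimately show False
    using cInf_lower[OF _ bdd, of \<tau>] unfolding m_def B_def by auto
qed

theorem eating_run_UNIV_le:
  fixes P :: "'a::finite \<Rightarrow> ('o::finite \<times> 'o) set"
  assumes run: "eating_run P (\<lambda>_. UNIV) r" and run': "eating_run P A r'" and "0 \<le> \<tau>"
  shows "r \<tau> y \<le> r' \<tau> y"
proof -
  define G where "G = {\<tau> \<in> {0..}. \<forall>y. r \<tau> y \<le> r' \<tau> y}"
  have "closed {\<tau> \<in> {0..}. r \<tau> y \<le> r' \<tau> y}" for y
    by (intro continuous_on_closed_Collect_le eating_run_continuous_on[OF run]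
        eating_run_continuous_on[OF run'] closed_atLeast)
  moreover have "G = (\<Inter>y. {\<tau> \<in> {0..}. r \<tau> y \<le> r' \<tau> y})"
    unfolding G_def by auto
  ultimately have "closed G" by auto
  moreover have "0 \<in> G"
    unfolding G_def using eating_run_start[OF run] eating_run_start[OF run'] by simp
  moreover have "\<exists>b>m. {m..<b} \<subseteq> G" if m: "m \<in> G" for m
  proof -
    have "0 \<le> m" "\<forall>y. r m y \<le> r' m y"
      using m unfolding G_def by simp_all
    then obtain b where "b > m" and dom: "{m..<b} \<subseteq> {\<tau>. \<forall>y. r \<tau> y \<le> r' \<tau> y}"
      using eating_run_UNIV_le_at_right[OF run run'] by blast
    have "{m..<b} \<subseteq> G"
      using dom \<open>0 \<le> m\<close> unfolding G_def by auto
    with \<open>b > m\<close> show ?thesis by blast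
  qed
  ultimately have "{0..} \<subseteq> G"
    by (intro closed_contains_atLeast)
  with \<open>0 \<le> \<tau>\<close> show ?thesis unfolding G_def by auto
qed

theorem lemma2:
  fixes P :: "'a::finite \<Rightarrow> ('o::finite \<times> 'o) set"
    and S :: "'a set" and t :: real and u :: ereal
    and r r' :: "real \<Rightarrow> 'o \<Rightarrow> real"
    and x :: 'o and s :: real
  assumes "\<And>i. strict_linear_order (P i)"
    and "t \<ge> 0" and "ereal t \<le> u"
    and "eating_run P (\<lambda>_. UNIV) r"
    and "eating_run P (pause_pattern S t u) r'"
    and "s \<ge> t"
    and "\<forall>\<tau>. 0 \<le> \<tau> \<and> \<tau> < s \<longrightarrow> r \<tau> x > 0"
  shows "r' s x \<ge> r s x"
  using eating_run_UNIV_le[OF assms(4,5)] assms(2,6) by simp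

end
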